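(* Let $(\mathcal{R},\le,r)$ be a triple as in the context satisfying Axioms A.1, A.2 and A.4 and the non-triviality assumption. Then for every $s\in\mathcal{AR}$ and every $X\in\mathcal{R}$ with $s\sqsubseteq X$ there exists $\alpha_s\in{}^*(\mathcal{AR}\restriction X)\setminus(\mathcal{AR}\restriction X)$ such that $\alpha_s\in{}^*\{t\in\mathcal{AR}_{|s|+1}:s\sqsubseteq t\}$ (i.e. $s\sqsubseteq\alpha_s\in{}^*\mathcal{AR}_{|s|+1}$).
   Context: Setting (Alpha-Theory of Benci–Di Nasso): ZFC together with a new symbol $\alpha$ satisfying: ($\alpha$1) every sequence $\varphi=\langle\varphi_i:i\in\mathbb{N}\rangle$ has a unique ideal value $\varphi[\alpha]$; ($\alpha$2) if $\varphi[\alpha]=\psi[\alpha]$ and $f\circ\varphi$, $f\circ\psi$ make sense then $(f\circ\varphi)[\alpha]=(f\circ\psi)[\alpha]$; ($\alpha$3) constant real sequences $r$ have ideal value $r$, and $\langle i\rangle$ has ideal value $\alpha\notin\mathbb{N}$; ($\alpha$4) if $\vartheta_i=\{\varphi_i,\psi_i\}$ then $\vartheta[\alpha]=\{\varphi[\alpha],\psi[\alpha]\}$; ($\alpha$5) the constant sequence $\emptyset$ has ideal value $\emptyset$, and for nonempty $\psi_i$, $\psi[\alpha]=\{\vartheta[\alpha]:\vartheta_i\in\psi_i\ \forall i\}$. ${}^*A$ is the ideal value of the constant sequence with value $A$. Abstract setting: $\mathcal{R}\neq\emptyset$, $\le$ a quasi-order on $\mathcal{R}$, $r$ a function on $\mathbb{N}\times\mathcal{R}$,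 $r_n(X)=r(n,X)$; $\mathcal{AR}$ = range of $r$; $\mathcal{AR}_n=\{r_n(X):X\in\mathcal{R}\}$; $\mathcal{AR}\restriction X=\{r_n(Y):n\in\mathbb{N},Y\in\mathcal{R},Y\le X\}$; $s\sqsubseteq X$ iff $s=r_n(X)$ for some $n$; $[s,X]=\{Y\in\mathcal{R}:s\sqsubseteq Y\le X\}$. A.1: (a) $r_0(X)=\emptyset$; (b) $X\neq Y\Rightarrow r_i(X)\neq r_i(Y)$ for some $i$; (c) $r_i(X)=r_j(Y)\Rightarrow i=j$ and $r_k(X)=r_k(Y)$ for $k<i$. $|s|$ is the unique $i$ with $s=r_i(X)$ for some $X$; $s\sqsubseteq t$ (for $s,t\in\mathcal{AR}$) iff $s=r_i(X)$, $t=r_j(X)$ for some $X$, $i\le j$ ($s\sqsubset t$ if $i<j$). A.2: a quasi-order $\le_{fin}$ on $\mathcal{AR}$ with (a) $\{t:t\le_{fin}s\}$ finite; (b) $X\le Y$ iff $\forall i\,\exists j\ r_i(X)\le_{fin}r_j(Y)$; (c) $s\sqsubseteq t\le_{fin}u\Rightarrow\exists v\sqsubseteq u\ s\le_{fin}v$. $\mathrm{depth}_X(s)$ = least $i$ with $s\le_{fin}r_i(X)$ ($\infty$ if none); $[\mathrm{depth}_X(s),X]=[r_i(X),X]$ for that $i$. For $n>|s|$, $r_n[s,X]=\{t\in\mathcal{AR}_n:s\sqsubset t,\ t\le_{fin}r_j(X)\text{ for some }j\}$. A.4: if $\mathrm{depth}_Y(s)<\infty$ and $\mathcal{O}\subseteq\mathcal{AR}_{|s|+1}$,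 there is $X\in[\mathrm{depth}_Y(s),Y]$ with $r_{|s|+1}[s,X]\subseteq\mathcal{O}$ or $r_{|s|+1}[s,X]\cap\mathcal{O}=\emptyset$. Non-triviality assumption: whenever $[s,X]\neq\emptyset$, $r_{|s|+1}[s,X]$ is infinite. *)

theory Defs
  imports Main
begin

(* ---------- Alpha-Theory, rendered via its ultrapower model ----------
   A model of Alpha-Theory is determined by the nonprincipal ultrafilter
   U = {A \<subseteq> \<nat>. \<alpha> \<in> *A}; the ideal value \<phi>[\<alpha>] of a sequence \<phi> is its
   U-class.  \<phi>[\<alpha>] \<in> *A  iff  {i. \<phi> i \<in> A} \<in> U, and \<phi>[\<alpha>] = a (standard)
   iff {i. \<phi> i = a} \<in> U. *)

definition free_ultrafilter_nat :: "nat filter \<Rightarrow> bool" where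
  "free_ultrafilter_nat U \<longleftrightarrow>
     U \<noteq> bot \<and> (\<forall>P. eventually P U \<or> eventually (\<lambda>i. \<not> P i) U)
     \<and> (\<forall>n. eventually (\<lambda>i. i \<noteq> n) U)"

definition star_in :: "nat filter \<Rightarrow> (nat \<Rightarrow> 'a) \<Rightarrow> 'a set \<Rightarrow> bool" where
  "star_in U \<phi> A \<longleftrightarrow> eventually (\<lambda>i. \<phi> i \<in> A) U"

definition standard_in :: "nat filter \<Rightarrow> (nat \<Rightarrow> 'a) \<Rightarrow> 'a set \<Rightarrow> bool" where
  "standard_in U \<phi> A \<longleftrightarrow> (\<exists>a\<in>A. eventually (\<lambda>i. \<phi> i = a) U)"

definition AR :: "(nat \<Rightarrow> 'r \<Rightarrow> 'b set) \<Rightarrow> 'b set set" where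
  "AR r = {r n X | n X. True}"

definition ARn :: "(nat \<Rightarrow> 'r \<Rightarrow> 'b set) \<Rightarrow> nat \<Rightarrow> 'b set set" where
  "ARn r n = {r n X | X. True}"

definition AR_restr :: "('r \<Rightarrow> 'r \<Rightarrow> bool) \<Rightarrow> (nat \<Rightarrow> 'r \<Rightarrow> 'b set) \<Rightarrow> 'r \<Rightarrow> 'b set set" where
  "AR_restr le r X = {r n Y | n Y. le Y X}"

definition init_seg :: "(nat \<Rightarrow> 'r \<Rightarrow> 'b set) \<Rightarrow> 'b set \<Rightarrow> 'r \<Rightarrow> bool" where
  "init_seg r s X \<longleftrightarrow> (\<exists>n. s = r n X)"

definition ar_le :: "(nat \<Rightarrow> 'r \<Rightarrow> 'b set) \<Rightarrow> 'b set \<Rightarrow> 'b set \<Rightarrow> bool" where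
  "ar_le r s t \<longleftrightarrow> (\<exists>X i j. s = r i X \<and> t = r j X \<and> i \<le> j)"

definition ar_less :: "(nat \<Rightarrow> 'r \<Rightarrow> 'b set) \<Rightarrow> 'b set \<Rightarrow> 'b set \<Rightarrow> bool" where
  "ar_less r s t \<longleftrightarrow> (\<exists>X i j. s = r i X \<and> t = r j X \<and> i < j)"

definition ar_len :: "(nat \<Rightarrow> 'r \<Rightarrow> 'b set) \<Rightarrow> 'b set \<Rightarrow> nat" where
  "ar_len r s = (THE i. \<exists>X. s = r i X)"

definition basic_set :: "('r \<Rightarrow> 'r \<Rightarrow> bool) \<Rightarrow> (nat \<Rightarrow> 'r \<Rightarrow> 'b set) \<Rightarrow> 'b set \<Rightarrow> 'r \<Rightarrow> 'r set" where
  "basic_set le r s X = {Y. init_seg r s Y \<and> le Y X}"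

(* depth_X(s) (only meaningful when finite, i.e. \<exists>i. lefin s (r i X)) *)
definition depth :: "('b set \<Rightarrow> 'b set \<Rightarrow> bool) \<Rightarrow> (nat \<Rightarrow> 'r \<Rightarrow> 'b set) \<Rightarrow> 'r \<Rightarrow> 'b set \<Rightarrow> nat" where
  "depth lefin r X s = (LEAST i. lefin s (r i X))"

definition rn_basic :: "('b set \<Rightarrow> 'b set \<Rightarrow> bool) \<Rightarrow> (nat \<Rightarrow> 'r \<Rightarrow> 'b set) \<Rightarrow> nat \<Rightarrow> 'b set \<Rightarrow> 'r \<Rightarrow> 'b set set" where
  "rn_basic lefin r n s X = {t \<in> ARn r n. ar_less r s t \<and> (\<exists>j. lefin t (r j X))}"

definition axiom_A1 :: "(nat \<Rightarrow> 'r \<Rightarrow> 'b set) \<Rightarrow> bool" where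
  "axiom_A1 r \<longleftrightarrow>
     (\<forall>X. r 0 X = {}) \<and>
     (\<forall>X Y. X \<noteq> Y \<longrightarrow> (\<exists>i. r i X \<noteq> r i Y)) \<and>
     (\<forall>i j X Y. r i X = r j Y \<longrightarrow> i = j \<and> (\<forall>k<i. r k X = r k Y))"

definition axiom_A2 :: "('r \<Rightarrow> 'r \<Rightarrow> bool) \<Rightarrow> (nat \<Rightarrow> 'r \<Rightarrow> 'b set) \<Rightarrow> ('b set \<Rightarrow> 'b set \<Rightarrow> bool) \<Rightarrow> bool" where
  "axiom_A2 le r lefin \<longleftrightarrow>
     (\<forall>s\<in>AR r. lefin s s) \<and>
     (\<forall>s\<in>AR r. \<forall>t\<in>AR r. \<forall>u\<in>AR r. lefin s t \<longrightarrow> lefin t u \<longrightarrow> lefin s u) \<and>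
     (\<forall>s\<in>AR r. finite {t \<in> AR r. lefin t s}) \<and>
     (\<forall>X Y. le X Y \<longleftrightarrow> (\<forall>i. \<exists>j. lefin (r i X) (r j Y))) \<and>
     (\<forall>s\<in>AR r. \<forall>t\<in>AR r. \<forall>u\<in>AR r. ar_le r s t \<longrightarrow> lefin t u \<longrightarrow>
         (\<exists>v. ar_le r v u \<and> lefin s v))"

definition axiom_A4 :: "('r \<Rightarrow> 'r \<Rightarrow> bool) \<Rightarrow> (nat \<Rightarrow> 'r \<Rightarrow> 'b set) \<Rightarrow> ('b set \<Rightarrow> 'b set \<Rightarrow> bool) \<Rightarrow> bool" where
  "axiom_A4 le r lefin \<longleftrightarrow>
     (\<forall>s\<in>AR r. \<forall>Y \<O>. (\<exists>i. lefin s (r i Y)) \<longrightarrow> \<O> \<subseteq> ARn r (ar_len r s + 1) \<longrightarrow>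
        (\<exists>X \<in> basic_set le r (r (depth lefin r Y s) Y) Y.
            rn_basic lefin r (ar_len r s + 1) s X \<subseteq> \<O> \<or>
            rn_basic lefin r (ar_len r s + 1) s X \<inter> \<O> = {}))"

definition nontrivial :: "('r \<Rightarrow> 'r \<Rightarrow> bool) \<Rightarrow> (nat \<Rightarrow> 'r \<Rightarrow> 'b set) \<Rightarrow> ('b set \<Rightarrow> 'b set \<Rightarrow> bool) \<Rightarrow> bool" where
  "nontrivial le r lefin \<longleftrightarrow>
     (\<forall>s\<in>AR r. \<forall>X. basic_set le r s X \<noteq> {} \<longrightarrow>
        infinite (rn_basic lefin r (ar_len r s + 1) s X))"

end

theory Submission
  imports Defs
begin

text \<open>
  An injective sequence has a nonstandard ideal value, so it suffices to show that the set of
  one-step extensions t of s = r_n(X) lying in AR|X is infinite. Applying A.4 to this set at s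
  gives X' in [s, X] such that all of r_{n+1}[s, X'] lies in the set or none of it does;
  r_{n+1}(X') lies in both, hence all of r_{n+1}[s, X'] does, and that set is infinite by
  non-triviality. For A.4 to return X' through s one needs depth_X(r_n(X)) = n, which follows by
  induction on n from the same homogeneity argument applied to a singleton.
\<close>

lemma r_eq_imp_index_eq:
  assumes "axiom_A1 r" and "r i X = r j Y"
  shows "i = j"
  using assms unfolding axiom_A1_def by blast

lemma r_eq_imp_prefix_eq:
  assumes "axiom_A1 r" and "r i X = r i Y" and "k \<le> i"
  shows "r k X = r k Y"
  using assms unfolding axiom_A1_def by (metis le_neq_implies_less)

lemma ar_len_r [simp]:
  assumes "axiom_A1 r"
  shows "ar_len r (r n X) = n"
  unfolding ar_len_def
proof (rule the_equality)
  show "\<exists>Y. r n X = r n Y"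
    by blast
qed (use r_eq_imp_index_eq[OF assms] in metis)

lemma r_in_AR [simp]: "r n X \<in> AR r"
  unfolding AR_def by blast

lemma lefin_r_refl:
  assumes "axiom_A2 le r lefin"
  shows "lefin (r n X) (r n X)"
proof -
  have "\<forall>s\<in>AR r. lefin s s"
    using assms unfolding axiom_A2_def by (rule conjunct1)
  then show ?thesis
    by simp
qed

lemma axiom_A4D:
  assumes "axiom_A4 le r lefin" and "s \<in> AR r" and "lefin s (r i Y)"
    and "T \<subseteq> ARn r (ar_len r s + 1)"
  obtains X where "X \<in> basic_set le r (r (depth lefin r Y s) Y) Y"
    and "rn_basic lefin r (ar_len r s + 1) s X \<subseteq> T \<or> rn_basic lefin r (ar_len r s + 1) s X \<inter> T = {}"
  using assms unfolding axiom_A4_def by blast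

lemma nontrivialD:
  assumes "nontrivial le r lefin" and "s \<in> AR r" and "X \<in> basic_set le r s X'"
  shows "infinite (rn_basic lefin r (ar_len r s + 1) s X')"
  using assms unfolding nontrivial_def by blast

lemma basic_set_r_iff:
  assumes "axiom_A1 r"
  shows "Y \<in> basic_set le r (r n X) X' \<longleftrightarrow> le Y X' \<and> r n Y = r n X"
proof -
  have "(\<exists>k. r n X = r k Y) \<longleftrightarrow> r n Y = r n X"
    using r_eq_imp_index_eq[OF assms, of n X _ Y] by auto
  then show ?thesis
    unfolding basic_set_def init_seg_def by auto
qed

lemma infinite_if_meets_all_rn_basic:
  assumes refl: "\<forall>X. le X X"
    and A1: "axiom_A1 r" and A2: "axiom_A2 le r lefin" and A4: "axiom_A4 le r lefin"
    and NT: "nontrivial le r lefin"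
    and depth: "depth lefin r X (r n X) = n"
    and T_sub: "T \<subseteq> ARn r (Suc n)"
    and meets: "\<And>X'. le X' X \<Longrightarrow> r n X' = r n X \<Longrightarrow> rn_basic lefin r (Suc n) (r n X) X' \<inter> T \<noteq> {}"
  shows "infinite T"
proof -
  have "T \<subseteq> ARn r (ar_len r (r n X) + 1)"
    using T_sub A1 by simp
  then obtain X' where
    "X' \<in> basic_set le r (r (depth lefin r X (r n X)) X) X" and
    "rn_basic lefin r (ar_len r (r n X) + 1) (r n X) X' \<subseteq> T \<or>
     rn_basic lefin r (ar_len r (r n X) + 1) (r n X) X' \<inter> T = {}"
    by (rule axiom_A4D[OF A4 r_in_AR lefin_r_refl[OF A2]])
  then have "X' \<in> basic_set le r (r n X) X" and
    hom: "rn_basic lefin r (Suc n) (r n X) X' \<subseteq> T \<or> rn_basic lefin r (Suc n) (r n X) X' \<inter> T = {}"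
    using A1 by (simp_all add: depth)
  then have X'_le: "le X' X" and X'_n: "r n X' = r n X"
    by (simp_all add: basic_set_r_iff[OF A1])
  with hom meets have sub: "rn_basic lefin r (Suc n) (r n X) X' \<subseteq> T"
    by blast
  have "X' \<in> basic_set le r (r n X) X'"
    using refl X'_n by (simp add: basic_set_r_iff[OF A1])
  then have "infinite (rn_basic lefin r (Suc n) (r n X) X')"
    using nontrivialD[OF NT r_in_AR] by (simp add: ar_len_r[OF A1])
  with sub show ?thesis
    using finite_subset by blast
qed

lemma depth_r_self:
  assumes refl: "\<forall>X. le X X"
    and A1: "axiom_A1 r" and A2: "axiom_A2 le r lefin" and A4: "axiom_A4 le r lefin"
    and NT: "nontrivial le r lefin"
  shows "depth lefin r X (r n X) = n"
proof (induction n arbitrary: X)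
  case 0
  show ?case
    unfolding depth_def using lefin_r_refl[OF A2] by (rule Least_eq_0)
next
  case (Suc m)
  have no_drop: "\<not> lefin (r (Suc m) X) (r d X)" if "d < Suc m" for d
  proof
    assume drop: "lefin (r (Suc m) X) (r d X)"
    have "rn_basic lefin r (Suc m) (r m X) X' \<inter> {r (Suc m) X} \<noteq> {}"
      if "r m X' = r m X" for X'
    proof -
      have "r d X' = r d X"
        using r_eq_imp_prefix_eq[OF A1 \<open>r m X' = r m X\<close>] \<open>d < Suc m\<close> by simp
      then have "lefin (r (Suc m) X) (r d X')"
        using drop by simp
      moreover have "ar_less r (r m X) (r (Suc m) X)"
        unfolding ar_less_def by blast
      ultimately show ?thesis
        unfolding rn_basic_def ARn_def by auto
    qed
    moreover have "{r (Suc m) X} \<subseteq> ARn r (Suc m)"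
      unfolding ARn_def by blast
    ultimately have "infinite {r (Suc m) X}"
      by (intro infinite_if_meets_all_rn_basic[OF refl A1 A2 A4 NT Suc.IH])
    then show False
      by simp
  qed
  show ?case
    unfolding depth_def
  proof (rule Least_equality)
    show "lefin (r (Suc m) X) (r (Suc m) X)"
      by (rule lefin_r_refl[OF A2])
  next
    fix d
    assume "lefin (r (Suc m) X) (r d X)"
    then show "Suc m \<le> d"
      using no_drop[of d] by (cases "d < Suc m") auto
  qed
qed

lemma infinite_one_step_extensions_below:
  assumes refl: "\<forall>X. le X X"
    and A1: "axiom_A1 r" and A2: "axiom_A2 le r lefin" and A4: "axiom_A4 le r lefin"
    and NT: "nontrivial le r lefin"
  shows "infinite ({t \<in> ARn r (Suc n). ar_le r (r n X) t} \<inter> AR_restr le r X)"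
proof (rule infinite_if_meets_all_rn_basic[OF refl A1 A2 A4 NT depth_r_self[OF refl A1 A2 A4 NT]])
  fix X' assume X'_le: "le X' X" and X'_n: "r n X' = r n X"
  have "ar_less r (r n X) (r (Suc n) X')"
    unfolding ar_less_def using X'_n by (intro exI[of _ X'] exI[of _ n] exI[of _ "Suc n"]) simp
  moreover have "ar_le r (r n X) (r (Suc n) X')"
    unfolding ar_le_def using X'_n by (intro exI[of _ X'] exI[of _ n] exI[of _ "Suc n"]) simp
  moreover have "r (Suc n) X' \<in> ARn r (Suc n)" and "r (Suc n) X' \<in> AR_restr le r X"
    unfolding ARn_def AR_restr_def using X'_le by blast+
  ultimately have "r (Suc n) X' \<in> rn_basic lefin r (Suc n) (r n X) X' \<inter>
               ({t \<in> ARn r (Suc n). ar_le r (r n X) t} \<inter> AR_restr le r X)"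
    using lefin_r_refl[OF A2] unfolding rn_basic_def by blast
  then show "rn_basic lefin r (Suc n) (r n X) X' \<inter>
               ({t \<in> ARn r (Suc n). ar_le r (r n X) t} \<inter> AR_restr le r X) \<noteq> {}"
    by blast
qed blast

lemma free_ultrafilter_not_eventually_const_if_inj:
  assumes U: "free_ultrafilter_nat U" and "inj \<phi>"
  shows "\<not> eventually (\<lambda>i. \<phi> i = a) U"
proof
  assume ev: "eventually (\<lambda>i. \<phi> i = a) U"
  have "eventually (\<lambda>i. i \<noteq> inv \<phi> a) U"
    using U unfolding free_ultrafilter_nat_def by blast
  with ev have "eventually (\<lambda>i. \<phi> i = a \<and> i \<noteq> inv \<phi> a) U"
    by (rule eventually_conj)
  then have "eventually (\<lambda>i. False) U"
    by (rule eventually_mono) (use \<open>inj \<phi>\<close> in auto)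
  then show False
    using U unfolding free_ultrafilter_nat_def by (simp add: eventually_False)
qed

lemma exists_nonstandard_in_star_of_infinite:
  assumes U: "free_ultrafilter_nat U" and "infinite A"
  shows "\<exists>\<phi>. (\<forall>i. \<phi> i \<in> A) \<and> (\<forall>a. \<not> eventually (\<lambda>i. \<phi> i = a) U)"
proof -
  obtain \<phi> :: "nat \<Rightarrow> _" where "inj \<phi>" and "range \<phi> \<subseteq> A"
    using infinite_countable_subset[OF \<open>infinite A\<close>] by blast
  show ?thesis
  proof (intro exI conjI allI)
    show "\<phi> i \<in> A" for i
      using \<open>range \<phi> \<subseteq> A\<close> by blast
    show "\<not> eventually (\<lambda>i. \<phi> i = a) U" for a
      by (rule free_ultrafilter_not_eventually_const_if_inj[OF U \<open>inj \<phi>\<close>])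
  qed
qed

theorem mainTheorem19:
  fixes le :: "'r \<Rightarrow> 'r \<Rightarrow> bool"
    and r :: "nat \<Rightarrow> 'r \<Rightarrow> 'b set"
    and lefin :: "'b set \<Rightarrow> 'b set \<Rightarrow> bool"
    and U :: "nat filter"
  assumes alpha: "free_ultrafilter_nat U"
    and refl: "\<forall>X. le X X"
    and trans: "\<forall>X Y Z. le X Y \<longrightarrow> le Y Z \<longrightarrow> le X Z"
    and A1: "axiom_A1 r"
    and A2: "axiom_A2 le r lefin"
    and A4: "axiom_A4 le r lefin"
    and NT: "nontrivial le r lefin"
    and s: "s \<in> AR r"
    and sX: "init_seg r s X"
  shows "\<exists>\<phi>. star_in U \<phi> (AR_restr le r X) \<and> \<not> standard_in U \<phi> (AR_restr le r X)
             \<and> star_in U \<phi> {t \<in> ARn r (ar_len r s + 1). ar_le r s t}"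
proof -
  from sX obtain n where "s = r n X"
    unfolding init_seg_def by blast
  then have "infinite ({t \<in> ARn r (ar_len r s + 1). ar_le r s t} \<inter> AR_restr le r X)"
    using infinite_one_step_extensions_below[OF refl A1 A2 A4 NT] A1 by simp
  then obtain \<phi> where
    "\<forall>i. \<phi> i \<in> {t \<in> ARn r (ar_len r s + 1). ar_le r s t} \<inter> AR_restr le r X" and
    "\<forall>a. \<not> eventually (\<lambda>i. \<phi> i = a) U"
    using exists_nonstandard_in_star_of_infinite[OF alpha] by blast
  then show ?thesis
    unfolding star_in_def standard_in_def by (auto intro: always_eventually)
qed

end
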